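(* Let $G$ be a group with a finite generating set $S$, equipped with the word metric $d_S$, and suppose $G$ acts transitively by isometries on a metric space $M$. Fix a basepoint $x_0 \in M$. Suppose that $M$ has asymptotic property C and that there is an integer $n \ge 0$ such that for every $R > 0$, the quasi-stabilizer $W_R(x_0)$ (with the metric restricted from $d_S$) has asymptotic dimension at most $n$. Then $G$ (with the metric $d_S$) has asymptotic property C.
   Context: The word metric on $G$ with respect to the finite generating set $S$ is $d_S(g,h) = $ the length of a shortest word in $S \cup S^{-1}$ representing $g^{-1}h$; it is left-invariant. A family $\mathcal{F}$ of subsets of a metric space $X$ is uniformly bounded if there is $R>0$ with $\mathrm{diam}(F) < R$ for all $F \in \mathcal{F}$; for $r>0$, $\mathcal{F}$ is $r$-disjoint if $d(F_1,F_2) > r$ for all distinct $F_1, F_2 \in \mathcal{F}$. A metric space $X$ has asymptotic dimension at most $n$ if for every $r>0$ there exist $n+1$ uniformly bounded, $r$-disjoint families $\mathcal{F}_0,\dots,\mathcal{F}_n$ of subsets of $X$ whose union covers $X$. A metric space $X$ has asymptotic property C if for every sequence of real numbers $0<r_0<r_1<\cdots$ there exist $m \in \mathbb{N}$ and uniformly bounded families $\mathcal{F}_0,\dots,\mathcal{F}_m$ of subsets of $X$ such that each $\mathcal{F}_i$ is $r_i$-disjoint and $\bigcup_{i=0}^m \mathcal{F}_i$ covers $X$. For a group $G$ acting by isometries on $M$, $x \in M$ and $R>0$, the $R$-quasi-stabilizer of $x$ is $W_R(x) = \{ g \in G \mid d_M(x, gx) \le R\}$. *)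

theory Defs
  imports "HOL-Analysis.Analysis" "HOL-Algebra.Group_Action" "HOL-Algebra.Generated_Groups"
begin

text \<open>Metric notions for a space given by a carrier X and distance d.
  Diameters and set distances are taken in the extended reals
  (sup of the empty set is -infinity, inf of the empty set is +infinity).\<close>

definition set_diam :: "('a \<Rightarrow> 'a \<Rightarrow> real) \<Rightarrow> 'a set \<Rightarrow> ereal" where
  "set_diam d F = (SUP x\<in>F. SUP y\<in>F. ereal (d x y))"

definition set_dist :: "('a \<Rightarrow> 'a \<Rightarrow> real) \<Rightarrow> 'a set \<Rightarrow> 'a set \<Rightarrow> ereal" where
  "set_dist d A B = (INF x\<in>A. INF y\<in>B. ereal (d x y))"

definition uniformly_bounded :: "('a \<Rightarrow> 'a \<Rightarrow> real) \<Rightarrow> 'a set set \<Rightarrow> bool" where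
  "uniformly_bounded d \<F> \<longleftrightarrow> (\<exists>R>0. \<forall>F\<in>\<F>. set_diam d F < ereal R)"

definition r_disjoint :: "('a \<Rightarrow> 'a \<Rightarrow> real) \<Rightarrow> real \<Rightarrow> 'a set set \<Rightarrow> bool" where
  "r_disjoint d r \<F> \<longleftrightarrow> (\<forall>F1\<in>\<F>. \<forall>F2\<in>\<F>. F1 \<noteq> F2 \<longrightarrow> set_dist d F1 F2 > ereal r)"

definition asdim_le :: "'a set \<Rightarrow> ('a \<Rightarrow> 'a \<Rightarrow> real) \<Rightarrow> nat \<Rightarrow> bool" where
  "asdim_le X d n \<longleftrightarrow>
     (\<forall>r>0. \<exists>\<F> :: nat \<Rightarrow> 'a set set.
        (\<forall>i\<le>n. (\<forall>F\<in>\<F> i. F \<subseteq> X) \<and> uniformly_bounded d (\<F> i) \<and> r_disjoint d r (\<F> i))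
        \<and> X \<subseteq> (\<Union>i\<le>n. \<Union>(\<F> i)))"

definition asymptotic_property_C :: "'a set \<Rightarrow> ('a \<Rightarrow> 'a \<Rightarrow> real) \<Rightarrow> bool" where
  "asymptotic_property_C X d \<longleftrightarrow>
     (\<forall>r :: nat \<Rightarrow> real. 0 < r 0 \<and> strict_mono r \<longrightarrow>
        (\<exists>m::nat. \<exists>\<F> :: nat \<Rightarrow> 'a set set.
           (\<forall>i\<le>m. (\<forall>F\<in>\<F> i. F \<subseteq> X) \<and> uniformly_bounded d (\<F> i) \<and> r_disjoint d (r i) (\<F> i))
           \<and> X \<subseteq> (\<Union>i\<le>m. \<Union>(\<F> i))))"

definition word_length :: "('g, 'b) monoid_scheme \<Rightarrow> 'g set \<Rightarrow> 'g \<Rightarrow> nat" where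
  "word_length G S g = (LEAST n. \<exists>ws. length ws = n \<and> set ws \<subseteq> S \<union> m_inv G ` S
                                   \<and> foldr (\<otimes>\<^bsub>G\<^esub>) ws \<one>\<^bsub>G\<^esub> = g)"

definition word_dist :: "('g, 'b) monoid_scheme \<Rightarrow> 'g set \<Rightarrow> 'g \<Rightarrow> 'g \<Rightarrow> real" where
  "word_dist G S g h = real (word_length G S (inv\<^bsub>G\<^esub> g \<otimes>\<^bsub>G\<^esub> h))"

definition quasi_stabilizer ::
  "('g, 'b) monoid_scheme \<Rightarrow> ('g \<Rightarrow> 'm \<Rightarrow> 'm) \<Rightarrow> ('m \<Rightarrow> 'm \<Rightarrow> real) \<Rightarrow> real \<Rightarrow> 'm \<Rightarrow> 'g set" where
  "quasi_stabilizer G \<phi> dM R x = {g \<in> carrier G. dM x (\<phi> g x) \<le> R}"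

end

theory Submission
  imports Defs
begin

text \<open>The orbit map g \<mapsto> g x0 is Lipschitz for the word metric, so a uniformly bounded,
  sufficiently disjoint family in M pulls back to a disjoint family in G whose members lie in left
  translates of a single quasi-stabilizer W_D. Left translation is an isometry of the word metric,
  so cutting every member by the translates of an (n+1)-coloured cover of W_D yields n+1 uniformly
  bounded disjoint families. Doing this for every layer of a property-C cover of M, at scales read
  off a suitably thinned sequence, and interleaving layers with colours gives property C for G.\<close>

lemma dist_less_of_set_diam_less:
  assumes "set_diam d F < ereal R" "x \<in> F" "y \<in> F"
  shows "d x y < R"
proof -
  have "ereal (d x y) \<le> set_diam d F"
    unfolding set_diam_def using assms(2,3) by (meson SUP_upper2 order_refl)
  then have "ereal (d x y) < ereal R" using assms(1) by (rule order_le_less_trans)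
  then show ?thesis by simp
qed

lemma set_diam_subset: "A \<subseteq> B \<Longrightarrow> set_diam d A \<le> set_diam d B"
  unfolding set_diam_def by (intro SUP_subset_mono) auto

lemma set_diam_image_isometry:
  assumes "\<And>x y. x \<in> F \<Longrightarrow> y \<in> F \<Longrightarrow> d (f x) (f y) = d x y"
  shows "set_diam d (f ` F) = set_diam d F"
  unfolding set_diam_def image_image by (intro SUP_cong refl) (simp add: assms)

lemma set_dist_greatest:
  "(\<And>x y. x \<in> A \<Longrightarrow> y \<in> B \<Longrightarrow> c \<le> d x y) \<Longrightarrow> ereal c \<le> set_dist d A B"
  unfolding set_dist_def by (auto intro!: INF_greatest)

lemma set_dist_antimono: "A \<subseteq> A' \<Longrightarrow> B \<subseteq> B' \<Longrightarrow> set_dist d A' B' \<le> set_dist d A B"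
  unfolding set_dist_def by (intro INF_superset_mono) auto

lemma set_dist_image_isometry:
  assumes "\<And>x y. x \<in> A \<Longrightarrow> y \<in> B \<Longrightarrow> d (f x) (f y) = d x y"
  shows "set_dist d (f ` A) (f ` B) = set_dist d A B"
  unfolding set_dist_def image_image by (intro INF_cong refl) (simp add: assms)

lemma set_dist_le: "x \<in> A \<Longrightarrow> y \<in> B \<Longrightarrow> set_dist d A B \<le> ereal (d x y)"
  unfolding set_dist_def by (rule INF_lower2, assumption, rule INF_lower, assumption)

lemma set_dist_vimage_lipschitz:
  assumes "L > 0" and lip: "\<And>x y. x \<in> X \<Longrightarrow> y \<in> X \<Longrightarrow> d' (f x) (f y) \<le> L * d x y"
    and gap: "ereal (L * r) < set_dist d' A B"
  shows "ereal r \<le> set_dist d {x \<in> X. f x \<in> A} {x \<in> X. f x \<in> B}"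
proof (rule set_dist_greatest)
  fix x y assume x: "x \<in> {x \<in> X. f x \<in> A}" and y: "y \<in> {x \<in> X. f x \<in> B}"
  have "ereal (L * r) < ereal (d' (f x) (f y))"
    using gap set_dist_le[of "f x" A "f y" B d'] x y by (blast intro: order_less_le_trans)
  then have "L * r < d' (f x) (f y)" by simp
  also have "\<dots> \<le> L * d x y" using lip x y by blast
  finally show "r \<le> d x y" using \<open>L > 0\<close> by simp
qed

lemma r_disjoint_mono: "r_disjoint d r \<F> \<Longrightarrow> r' \<le> r \<Longrightarrow> r_disjoint d r' \<F>"
  unfolding r_disjoint_def by (meson ereal_less_eq(3) order_le_less_trans)

lemma r_disjoint_image:
  assumes "r_disjoint d r \<F>"
    and "\<And>F F'. F \<in> \<F> \<Longrightarrow> F' \<in> \<F> \<Longrightarrow> set_dist d F F' \<le> set_dist d (f F) (f F')"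
  shows "r_disjoint d r (f ` \<F>)"
  unfolding r_disjoint_def
proof (intro ballI impI)
  fix E E' assume "E \<in> f ` \<F>" "E' \<in> f ` \<F>" "E \<noteq> E'"
  then obtain F F' where "F \<in> \<F>" "F' \<in> \<F>" "E = f F" "E' = f F'" "F \<noteq> F'" by blast
  then show "ereal r < set_dist d E E'"
    using assms unfolding r_disjoint_def by (blast intro: order_less_le_trans)
qed

lemma r_disjoint_UN:
  assumes "\<And>a b. a \<in> I \<Longrightarrow> b \<in> I \<Longrightarrow> a \<noteq> b \<Longrightarrow> ereal r < set_dist d (U a) (U b)"
    and "\<And>a. a \<in> I \<Longrightarrow> r_disjoint d r (\<V> a)"
    and "\<And>a V. a \<in> I \<Longrightarrow> V \<in> \<V> a \<Longrightarrow> V \<subseteq> U a"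
  shows "r_disjoint d r (\<Union>a\<in>I. \<V> a)"
  unfolding r_disjoint_def
proof (intro ballI impI)
  fix V V' assume "V \<in> (\<Union>a\<in>I. \<V> a)" "V' \<in> (\<Union>a\<in>I. \<V> a)" "V \<noteq> V'"
  then obtain a b where ab: "a \<in> I" "b \<in> I" "V \<in> \<V> a" "V' \<in> \<V> b" by blast
  show "ereal r < set_dist d V V'"
  proof (cases "a = b")
    case True
    then show ?thesis using assms(2) ab \<open>V \<noteq> V'\<close> unfolding r_disjoint_def by blast
  next
    case False
    then have "ereal r < set_dist d (U a) (U b)" using assms(1) ab by blast
    also have "\<dots> \<le> set_dist d V V'" using assms(3) ab by (intro set_dist_antimono) auto
    finally show ?thesis .
  qed
qed

lemma uniformly_bounded_dominated:
  assumes "uniformly_bounded d \<F>" and "\<And>E. E \<in> \<E> \<Longrightarrow> \<exists>F\<in>\<F>. set_diam d E \<le> set_diam d F"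
  shows "uniformly_bounded d \<E>"
  using assms unfolding uniformly_bounded_def by (meson order_le_less_trans)

lemma asymptotic_property_C_of_layers:
  fixes n :: nat
  assumes layers: "\<And>r :: nat \<Rightarrow> real. 0 < r 0 \<Longrightarrow> strict_mono r \<Longrightarrow> \<exists>m \<G>.
      (\<forall>j\<le>m. \<forall>k\<le>n. (\<forall>F\<in>\<G> j k. F \<subseteq> X) \<and> uniformly_bounded d (\<G> j k) \<and> r_disjoint d (r j) (\<G> j k))
      \<and> X \<subseteq> (\<Union>j\<le>m. \<Union>k\<le>n. \<Union>(\<G> j k))"
  shows "asymptotic_property_C X d"
  unfolding asymptotic_property_C_def
proof (intro allI impI, elim conjE)
  fix r :: "nat \<Rightarrow> real" assume r0: "0 < r 0" and r: "strict_mono r"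
  define N where "N = Suc n"
  \<comment> \<open>Layer j is split into the colours k \<le> n, flattened to the index N j + k.\<close>
  define r' where "r' j = r (N * j + n)" for j
  have "strict_mono r'"
    unfolding r'_def N_def by (intro strict_monoI strict_monoD[OF r]) (simp add: add_less_le_mono)
  moreover have "0 < r' 0"
    unfolding r'_def using r0 strict_mono_less_eq[OF r, of 0 n] by simp
  ultimately obtain m \<G> where
    \<G>: "\<forall>j\<le>m. \<forall>k\<le>n. (\<forall>F\<in>\<G> j k. F \<subseteq> X) \<and> uniformly_bounded d (\<G> j k) \<and> r_disjoint d (r' j) (\<G> j k)"
    and cover: "X \<subseteq> (\<Union>j\<le>m. \<Union>k\<le>n. \<Union>(\<G> j k))"
    using layers[of r'] by blast
  have flatten: "(N * j + k) div N = j" "(N * j + k) mod N = k" if "k \<le> n" for j k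
    using that unfolding N_def
    by (simp_all only: div_mult_self4 mod_mult_self4 nat.distinct(1) div_less mod_less less_Suc_eq_le)
  have index: "i div N \<le> m" "i mod N \<le> n" "r i \<le> r' (i div N)" if "i \<le> N * m + n" for i
  proof -
    have "i div N \<le> (N * m + n) div N" using that by (rule div_le_mono)
    then show "i div N \<le> m" using flatten by simp
    show "i mod N \<le> n" unfolding N_def by simp
    have "i \<le> N * (i div N) + n" using \<open>i mod N \<le> n\<close> by (metis add_le_cancel_left div_mult_mod_eq mult.commute)
    then show "r i \<le> r' (i div N)" unfolding r'_def using r by (simp add: strict_mono_less_eq)
  qed
  show "\<exists>m' \<F>. (\<forall>i\<le>m'. (\<forall>F\<in>\<F> i. F \<subseteq> X) \<and> uniformly_bounded d (\<F> i) \<and> r_disjoint d (r i) (\<F> i))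
          \<and> X \<subseteq> (\<Union>i\<le>m'. \<Union>(\<F> i))"
  proof (intro exI conjI allI impI)
    fix i assume "i \<le> N * m + n"
    note i = index[OF this]
    have "(\<forall>F\<in>\<G> (i div N) (i mod N). F \<subseteq> X) \<and> uniformly_bounded d (\<G> (i div N) (i mod N))
      \<and> r_disjoint d (r' (i div N)) (\<G> (i div N) (i mod N))"
      using \<G>[rule_format, OF i(1,2)] .
    then show "\<forall>F\<in>\<G> (i div N) (i mod N). F \<subseteq> X" "uniformly_bounded d (\<G> (i div N) (i mod N))"
      "r_disjoint d (r i) (\<G> (i div N) (i mod N))"
      using r_disjoint_mono[OF _ i(3)] by blast+
  next
    show "X \<subseteq> (\<Union>i\<le>N * m + n. \<Union>(\<G> (i div N) (i mod N)))"
    proof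
      fix x assume "x \<in> X"
      then obtain j k where jk: "j \<le> m" "k \<le> n" "x \<in> \<Union>(\<G> j k)" using cover by blast
      then have "N * j + k \<le> N * m + n" by (simp add: add_mono)
      moreover have "x \<in> \<Union>(\<G> ((N * j + k) div N) ((N * j + k) mod N))"
        using jk flatten[OF jk(2)] by simp
      ultimately show "x \<in> (\<Union>i\<le>N * m + n. \<Union>(\<G> (i div N) (i mod N)))" by blast
    qed
  qed
qed

context group
begin

lemma foldr_mult_closed: "set ws \<subseteq> carrier G \<Longrightarrow> foldr (\<otimes>) ws \<one> \<in> carrier G"
  by (induction ws) auto

lemma foldr_mult_eq: "set ws \<subseteq> carrier G \<Longrightarrow> a \<in> carrier G \<Longrightarrow> foldr (\<otimes>) ws a = foldr (\<otimes>) ws \<one> \<otimes> a"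
  by (induction ws) (auto simp: m_assoc foldr_mult_closed)

lemma generate_eq_word_product:
  assumes "S \<subseteq> carrier G" "g \<in> generate G S"
  shows "\<exists>ws. set ws \<subseteq> S \<union> m_inv G ` S \<and> foldr (\<otimes>) ws \<one> = g"
  using assms(2)
proof (induction rule: generate.induct)
  case one
  show ?case by (intro exI[of _ "[]"]) simp
next
  case (incl h)
  then show ?case using assms(1) by (intro exI[of _ "[h]"]) auto
next
  case (inv h)
  then show ?case using assms(1) by (intro exI[of _ "[inv h]"]) auto
next
  case (eng h1 h2)
  then obtain ws1 ws2 where ws: "set ws1 \<subseteq> S \<union> m_inv G ` S" "foldr (\<otimes>) ws1 \<one> = h1"
    "set ws2 \<subseteq> S \<union> m_inv G ` S" "foldr (\<otimes>) ws2 \<one> = h2"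
    by blast
  have "set ws1 \<subseteq> carrier G" "set ws2 \<subseteq> carrier G" using ws assms(1) by auto
  then have "foldr (\<otimes>) (ws1 @ ws2) \<one> = h1 \<otimes> h2"
    using ws foldr_mult_eq[of ws1 "foldr (\<otimes>) ws2 \<one>"] foldr_mult_closed[of ws2] by simp
  then show ?case using ws by (intro exI[of _ "ws1 @ ws2"]) auto
qed

lemma word_length_attained:
  assumes "S \<subseteq> carrier G" "g \<in> generate G S"
  shows "\<exists>ws. length ws = word_length G S g \<and> set ws \<subseteq> S \<union> m_inv G ` S \<and> foldr (\<otimes>) ws \<one> = g"
proof -
  have "\<exists>n ws. length ws = n \<and> set ws \<subseteq> S \<union> m_inv G ` S \<and> foldr (\<otimes>) ws \<one> = g"
    using generate_eq_word_product[OF assms] by blast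
  then show ?thesis unfolding word_length_def by (rule LeastI_ex)
qed

lemma word_dist_mult_left:
  assumes "a \<in> carrier G" "g \<in> carrier G" "h \<in> carrier G"
  shows "word_dist G S (a \<otimes> g) (a \<otimes> h) = word_dist G S g h"
proof -
  have "inv (a \<otimes> g) \<otimes> (a \<otimes> h) = inv g \<otimes> h"
    using assms by (simp add: inv_mult_group m_assoc[symmetric]) (simp add: m_assoc)
  then show ?thesis unfolding word_dist_def by simp
qed

lemma l_coset_eq_image: "a <# Z = (\<lambda>z. a \<otimes> z) ` Z"
  unfolding l_coset_def by auto

lemma set_diam_word_dist_l_coset:
  "a \<in> carrier G \<Longrightarrow> Z \<subseteq> carrier G \<Longrightarrow> set_diam (word_dist G S) (a <# Z) = set_diam (word_dist G S) Z"
  unfolding l_coset_eq_image by (intro set_diam_image_isometry word_dist_mult_left) auto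

lemma set_dist_word_dist_l_coset:
  "a \<in> carrier G \<Longrightarrow> Z \<subseteq> carrier G \<Longrightarrow> Z' \<subseteq> carrier G \<Longrightarrow>
    set_dist (word_dist G S) (a <# Z) (a <# Z') = set_dist (word_dist G S) Z Z'"
  unfolding l_coset_eq_image by (intro set_dist_image_isometry word_dist_mult_left) auto

lemma set_diam_Int_l_coset_le:
  assumes "a \<in> carrier G" "Z \<subseteq> carrier G"
  shows "set_diam (word_dist G S) (P \<inter> (a <# Z)) \<le> set_diam (word_dist G S) Z"
proof -
  have "set_diam (word_dist G S) (P \<inter> (a <# Z)) \<le> set_diam (word_dist G S) (a <# Z)"
    by (intro set_diam_subset) blast
  then show ?thesis using assms by (simp add: set_diam_word_dist_l_coset)
qed

lemma r_disjoint_Int_l_coset: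
  assumes "r_disjoint (word_dist G S) r \<V>" "\<forall>Z\<in>\<V>. Z \<subseteq> carrier G" "a \<in> carrier G"
  shows "r_disjoint (word_dist G S) r ((\<lambda>Z. P \<inter> (a <# Z)) ` \<V>)"
proof (rule r_disjoint_image[OF assms(1)])
  fix Z Z' assume "Z \<in> \<V>" "Z' \<in> \<V>"
  then have "set_dist (word_dist G S) Z Z' = set_dist (word_dist G S) (a <# Z) (a <# Z')"
    using assms(2,3) by (simp add: set_dist_word_dist_l_coset)
  also have "\<dots> \<le> set_dist (word_dist G S) (P \<inter> (a <# Z)) (P \<inter> (a <# Z'))"
    by (intro set_dist_antimono) blast+
  finally show "set_dist (word_dist G S) Z Z' \<le> set_dist (word_dist G S) (P \<inter> (a <# Z)) (P \<inter> (a <# Z'))" .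
qed

end

locale isometric_action = group_action G M \<phi> + Metric_space M dM
  for G (structure) and M and \<phi> :: "'g \<Rightarrow> 'm \<Rightarrow> 'm" and dM +
  assumes dist_action: "g \<in> carrier G \<Longrightarrow> x \<in> M \<Longrightarrow> y \<in> M \<Longrightarrow> dM (\<phi> g x) (\<phi> g y) = dM x y"

sublocale isometric_action \<subseteq> group G
  by (rule group_hom.axioms(1)[OF group_hom])

context isometric_action
begin

lemma action_closed: "g \<in> carrier G \<Longrightarrow> x \<in> M \<Longrightarrow> \<phi> g x \<in> M"
  using element_image by blast

lemma action_one: "x \<in> M \<Longrightarrow> \<phi> \<one> x = x"
  using id_eq_one by (metis restrict_apply')

lemma dist_action_inv_mult:
  assumes "x \<in> M" "g \<in> carrier G" "h \<in> carrier G"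
  shows "dM x (\<phi> (inv g \<otimes> h) x) = dM (\<phi> g x) (\<phi> h x)"
proof -
  have "\<phi> g (\<phi> (inv g \<otimes> h) x) = \<phi> h x"
    using assms by (simp add: composition_rule[symmetric] m_assoc[symmetric])
  then show ?thesis
    using dist_action[of g x "\<phi> (inv g \<otimes> h) x"] assms by (simp add: action_closed)
qed

lemma dist_action_word:
  assumes "x \<in> M" "set ws \<subseteq> carrier G" "\<And>t. t \<in> set ws \<Longrightarrow> dM x (\<phi> t x) \<le> c"
  shows "dM x (\<phi> (foldr (\<otimes>) ws \<one>) x) \<le> c * length ws"
  using assms(2,3)
proof (induction ws)
  case Nil
  then show ?case using assms(1) by (simp add: action_one)
next
  case (Cons t ws)
  let ?y = "\<phi> (foldr (\<otimes>) ws \<one>) x"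
  have t: "t \<in> carrier G" and ws: "foldr (\<otimes>) ws \<one> \<in> carrier G"
    using Cons.prems(1) foldr_mult_closed by auto
  have y: "?y \<in> M" using ws assms(1) by (rule action_closed)
  have "dM x (\<phi> (foldr (\<otimes>) (t # ws) \<one>) x) = dM x (\<phi> t ?y)"
    using t ws assms(1) by (simp add: composition_rule)
  also have "\<dots> \<le> dM x (\<phi> t x) + dM (\<phi> t x) (\<phi> t ?y)"
    using t ws y assms(1) by (intro triangle action_closed)
  also have "\<dots> = dM x (\<phi> t x) + dM x ?y"
    using t y assms(1) by (simp add: dist_action)
  also have "\<dots> \<le> c + c * length ws"
    using Cons by (intro add_mono) auto
  finally show ?case by (simp add: algebra_simps)
qed

lemma orbit_map_lipschitz:
  assumes "finite S" "S \<subseteq> carrier G" "generate G S = carrier G" "x \<in> M"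
  shows "\<exists>L>0. \<forall>g\<in>carrier G. \<forall>h\<in>carrier G. dM (\<phi> g x) (\<phi> h x) \<le> L * word_dist G S g h"
proof -
  define c where "c = (\<Sum>s\<in>S. dM x (\<phi> s x))"
  have generator: "dM x (\<phi> s x) \<le> c" if "s \<in> S" for s
    unfolding c_def using assms(1) that by (intro member_le_sum) auto
  have letter: "dM x (\<phi> t x) \<le> c" if t: "t \<in> S \<union> m_inv G ` S" for t
  proof (cases "t \<in> S")
    case False
    then obtain s where s: "s \<in> S" "t = inv s" using t by blast
    then have "dM x (\<phi> t x) = dM (\<phi> s x) x"
      using dist_action_inv_mult[of x s \<one>] assms(2,4) by (auto simp: action_one)
    then show ?thesis using generator[OF s(1)] commute by simp
  qed (rule generator)
  have "dM (\<phi> g x) (\<phi> h x) \<le> (c + 1) * word_dist G S g h"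
    if g: "g \<in> carrier G" and h: "h \<in> carrier G" for g h
  proof -
    obtain ws where ws: "length ws = word_length G S (inv g \<otimes> h)"
      "set ws \<subseteq> S \<union> m_inv G ` S" "foldr (\<otimes>) ws \<one> = inv g \<otimes> h"
      using word_length_attained[OF assms(2)] assms(3) g h by blast
    have "set ws \<subseteq> carrier G" using ws(2) assms(2) by auto
    then have "dM (\<phi> g x) (\<phi> h x) \<le> c * word_dist G S g h"
      using dist_action_word[OF assms(4), of ws c] letter ws g h
      by (simp add: dist_action_inv_mult[OF assms(4)] word_dist_def subset_iff)
    also have "\<dots> \<le> (c + 1) * word_dist G S g h"
      by (simp add: word_dist_def distrib_right)
    finally show ?thesis .
  qed
  moreover have "0 \<le> c" unfolding c_def by (simp add: sum_nonneg)
  ultimately show ?thesis by (intro exI[of _ "c + 1"]) auto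
qed

lemma orbit_preimage_subset_l_coset:
  assumes "x \<in> M" "a \<in> carrier G" "\<phi> a x \<in> A" "set_diam dM A < ereal D"
  shows "{g \<in> carrier G. \<phi> g x \<in> A} \<subseteq> a <# quasi_stabilizer G \<phi> dM D x"
proof
  fix g assume g: "g \<in> {g \<in> carrier G. \<phi> g x \<in> A}"
  have q: "inv a \<otimes> g \<in> carrier G" using g assms(2) by simp
  have "dM x (\<phi> (inv a \<otimes> g) x) = dM (\<phi> a x) (\<phi> g x)"
    using g assms by (simp add: dist_action_inv_mult)
  also have "\<dots> < D" using g assms(3,4) by (intro dist_less_of_set_diam_less) auto
  finally have "inv a \<otimes> g \<in> quasi_stabilizer G \<phi> dM D x"
    unfolding quasi_stabilizer_def using q by simp
  moreover have "g = a \<otimes> (inv a \<otimes> g)" using g assms(2) by (simp add: m_assoc[symmetric])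
  ultimately show "g \<in> a <# quasi_stabilizer G \<phi> dM D x" unfolding l_coset_eq_image by blast
qed

lemma pullback_layer:
  fixes n :: nat and L \<rho> :: real and \<U> :: "'m set set"
  assumes x: "x \<in> M"
    and lip: "\<And>g h. g \<in> carrier G \<Longrightarrow> h \<in> carrier G \<Longrightarrow> dM (\<phi> g x) (\<phi> h x) \<le> L * word_dist G S g h"
    and "L > 0" "\<rho> > 0"
    and asdim: "\<And>R. R > 0 \<Longrightarrow> asdim_le (quasi_stabilizer G \<phi> dM R x) (word_dist G S) n"
    and disj: "r_disjoint dM (L * (\<rho> + 1)) \<U>" and bdd: "uniformly_bounded dM \<U>"
  shows "\<exists>\<G>. (\<forall>k\<le>n. (\<forall>F\<in>\<G> k. F \<subseteq> carrier G) \<and> uniformly_bounded (word_dist G S) (\<G> k)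
              \<and> r_disjoint (word_dist G S) \<rho> (\<G> k))
           \<and> {g \<in> carrier G. \<phi> g x \<in> \<Union>\<U>} \<subseteq> (\<Union>k\<le>n. \<Union>(\<G> k))"
proof -
  let ?d = "word_dist G S"
  obtain D where "D > 0" and D: "\<And>A. A \<in> \<U> \<Longrightarrow> set_diam dM A < ereal D"
    using bdd unfolding uniformly_bounded_def by blast
  define W where "W = quasi_stabilizer G \<phi> dM D x"
  have W: "W \<subseteq> carrier G" unfolding W_def quasi_stabilizer_def by blast
  have "asdim_le W ?d n" unfolding W_def using \<open>D > 0\<close> by (rule asdim)
  note scale = this[unfolded asdim_le_def, rule_format, OF \<open>\<rho> > 0\<close>]
  obtain \<V> where
    \<V>: "\<forall>k\<le>n. (\<forall>Z\<in>\<V> k. Z \<subseteq> W) \<and> uniformly_bounded ?d (\<V> k) \<and> r_disjoint ?d \<rho> (\<V> k)"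
    and W_cover: "W \<subseteq> (\<Union>k\<le>n. \<Union>(\<V> k))"
    using scale by blast
  define P where "P A = {g \<in> carrier G. \<phi> g x \<in> A}" for A
  have "\<forall>A\<in>\<U>. \<exists>a. a \<in> carrier G \<and> P A \<subseteq> a <# W"
  proof
    fix A assume A: "A \<in> \<U>"
    show "\<exists>a. a \<in> carrier G \<and> P A \<subseteq> a <# W"
    proof (cases "P A = {}")
      case False
      then obtain a where a: "a \<in> carrier G" "\<phi> a x \<in> A" unfolding P_def by blast
      have "P A \<subseteq> a <# W"
        unfolding P_def W_def by (rule orbit_preimage_subset_l_coset[OF x a D[OF A]])
      with a(1) show ?thesis by blast
    qed auto
  qed
  then obtain rep where rep: "\<forall>A\<in>\<U>. rep A \<in> carrier G \<and> P A \<subseteq> rep A <# W"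
    by (rule bchoice[THEN exE])
  define \<G> where "\<G> k = (\<Union>A\<in>\<U>. (\<lambda>Z. P A \<inter> (rep A <# Z)) ` \<V> k)" for k
  have \<V>_carrier: "\<forall>Z\<in>\<V> k. Z \<subseteq> carrier G" if "k \<le> n" for k
    using \<V> that W by blast
  have separated: "ereal \<rho> < set_dist ?d (P A) (P A')" if "A \<in> \<U>" "A' \<in> \<U>" "A \<noteq> A'" for A A'
  proof -
    have "ereal (\<rho> + 1) \<le> set_dist ?d (P A) (P A')"
      unfolding P_def
    proof (rule set_dist_vimage_lipschitz[OF \<open>L > 0\<close>])
      show "ereal (L * (\<rho> + 1)) < set_dist dM A A'"
        using disj that unfolding r_disjoint_def by blast
    qed (rule lip)
    moreover have "ereal \<rho> < ereal (\<rho> + 1)" by simp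
    ultimately show ?thesis by (rule order_less_le_trans[rotated])
  qed
  show ?thesis
  proof (intro exI[of _ \<G>] conjI allI impI)
    fix k assume k: "k \<le> n"
    show "\<forall>F\<in>\<G> k. F \<subseteq> carrier G" unfolding \<G>_def P_def by blast
    show "uniformly_bounded ?d (\<G> k)"
    proof (rule uniformly_bounded_dominated)
      show "uniformly_bounded ?d (\<V> k)" using \<V> k by blast
      fix E assume "E \<in> \<G> k"
      then obtain A Z where AZ: "A \<in> \<U>" "Z \<in> \<V> k" "E = P A \<inter> (rep A <# Z)"
        unfolding \<G>_def by blast
      have "set_diam ?d E \<le> set_diam ?d Z"
        unfolding AZ(3) using rep AZ(1,2) \<V>_carrier[OF k] by (intro set_diam_Int_l_coset_le) auto
      with AZ(2) show "\<exists>Z\<in>\<V> k. set_diam ?d E \<le> set_diam ?d Z" by blast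
    qed
    show "r_disjoint ?d \<rho> (\<G> k)"
      unfolding \<G>_def
    proof (rule r_disjoint_UN[of \<U> _ _ P])
      fix A assume "A \<in> \<U>"
      then show "r_disjoint ?d \<rho> ((\<lambda>Z. P A \<inter> (rep A <# Z)) ` \<V> k)"
        using \<V> k \<V>_carrier[OF k] rep by (intro r_disjoint_Int_l_coset) auto
    qed (use separated in auto)
  next
    show "{g \<in> carrier G. \<phi> g x \<in> \<Union>\<U>} \<subseteq> (\<Union>k\<le>n. \<Union>(\<G> k))"
    proof
      fix g assume "g \<in> {g \<in> carrier G. \<phi> g x \<in> \<Union>\<U>}"
      then obtain A where A: "A \<in> \<U>" "g \<in> P A" unfolding P_def by blast
      then obtain w where w: "w \<in> W" "g = rep A \<otimes> w" using rep unfolding l_coset_eq_image by blast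
      then obtain k Z where kZ: "k \<le> n" "Z \<in> \<V> k" "w \<in> Z" using W_cover by blast
      then have "g \<in> P A \<inter> (rep A <# Z)" using A w unfolding l_coset_eq_image by blast
      then show "g \<in> (\<Union>k\<le>n. \<Union>(\<G> k))" unfolding \<G>_def using A kZ by blast
    qed
  qed
qed

end

lemma (in isometric_action) asymptotic_property_C_carrier:
  fixes n :: nat
  assumes S: "finite S" "S \<subseteq> carrier G" "generate G S = carrier G"
    and x: "x \<in> M"
    and C: "asymptotic_property_C M dM"
    and asdim: "\<And>R. R > 0 \<Longrightarrow> asdim_le (quasi_stabilizer G \<phi> dM R x) (word_dist G S) n"
  shows "asymptotic_property_C (carrier G) (word_dist G S)"
proof (rule asymptotic_property_C_of_layers)
  fix r :: "nat \<Rightarrow> real" assume r0: "0 < r 0" and r: "strict_mono r"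
  obtain L where "L > 0" and lip: "\<forall>g\<in>carrier G. \<forall>h\<in>carrier G. dM (\<phi> g x) (\<phi> h x) \<le> L * word_dist G S g h"
    using orbit_map_lipschitz[OF S x] by blast
  \<comment> \<open>The \<open>+ 1\<close> absorbs the loss of strictness when separation is pulled back.\<close>
  define s where "s j = L * (r j + 1)" for j
  have "0 < s 0" unfolding s_def using \<open>L > 0\<close> r0 by simp
  moreover have "strict_mono s"
    unfolding s_def using \<open>L > 0\<close> by (intro strict_monoI) (simp add: strict_monoD[OF r])
  ultimately obtain m \<U> where
    \<U>: "\<forall>j\<le>m. (\<forall>A\<in>\<U> j. A \<subseteq> M) \<and> uniformly_bounded dM (\<U> j) \<and> r_disjoint dM (s j) (\<U> j)"
    and M_cover: "M \<subseteq> (\<Union>j\<le>m. \<Union>(\<U> j))"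
    using C[unfolded asymptotic_property_C_def, rule_format, of s] by blast
  have "\<forall>j\<in>{..m}. \<exists>\<G>. (\<forall>k\<le>n. (\<forall>F\<in>\<G> k. F \<subseteq> carrier G) \<and> uniformly_bounded (word_dist G S) (\<G> k)
            \<and> r_disjoint (word_dist G S) (r j) (\<G> k))
         \<and> {g \<in> carrier G. \<phi> g x \<in> \<Union>(\<U> j)} \<subseteq> (\<Union>k\<le>n. \<Union>(\<G> k))"
    (is "\<forall>j\<in>_. \<exists>\<G>. ?layer j \<G>")
  proof
    fix j assume "j \<in> {..m}"
    then have "r_disjoint dM (L * (r j + 1)) (\<U> j)" "uniformly_bounded dM (\<U> j)"
      using \<U> unfolding s_def by auto
    moreover have "0 < r j" using r0 strict_mono_less_eq[OF r, of 0 j] by simp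
    ultimately show "\<exists>\<G>. ?layer j \<G>"
      using lip by (intro pullback_layer[OF x _ \<open>L > 0\<close> _ asdim]) auto
  qed
  then obtain \<G> where \<G>: "\<forall>j\<in>{..m}. (\<forall>k\<le>n. (\<forall>F\<in>\<G> j k. F \<subseteq> carrier G) \<and> uniformly_bounded (word_dist G S) (\<G> j k)
            \<and> r_disjoint (word_dist G S) (r j) (\<G> j k))
         \<and> {g \<in> carrier G. \<phi> g x \<in> \<Union>(\<U> j)} \<subseteq> (\<Union>k\<le>n. \<Union>(\<G> j k))"
    by (rule bchoice[THEN exE])
  have "carrier G \<subseteq> (\<Union>j\<le>m. \<Union>k\<le>n. \<Union>(\<G> j k))"
  proof
    fix g assume g: "g \<in> carrier G"
    then obtain j where "j \<le> m" "\<phi> g x \<in> \<Union>(\<U> j)" using M_cover action_closed[OF g x] by blast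
    moreover have "{g \<in> carrier G. \<phi> g x \<in> \<Union>(\<U> j)} \<subseteq> (\<Union>k\<le>n. \<Union>(\<G> j k))"
      using \<G> \<open>j \<le> m\<close> by simp
    ultimately have "g \<in> (\<Union>k\<le>n. \<Union>(\<G> j k))" using g by blast
    with \<open>j \<le> m\<close> show "g \<in> (\<Union>j\<le>m. \<Union>k\<le>n. \<Union>(\<G> j k))" by blast
  qed
  with \<G> show "\<exists>m \<G>. (\<forall>j\<le>m. \<forall>k\<le>n. (\<forall>F\<in>\<G> j k. F \<subseteq> carrier G) \<and> uniformly_bounded (word_dist G S) (\<G> j k)
      \<and> r_disjoint (word_dist G S) (r j) (\<G> j k)) \<and> carrier G \<subseteq> (\<Union>j\<le>m. \<Union>k\<le>n. \<Union>(\<G> j k))"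
    by (intro exI[of _ m] exI[of _ \<G>]) simp
qed

theorem proposition1:
  fixes G :: "('g, 'b) monoid_scheme" and S :: "'g set"
    and M :: "'m set" and dM :: "'m \<Rightarrow> 'm \<Rightarrow> real" and \<phi> :: "'g \<Rightarrow> 'm \<Rightarrow> 'm"
    and x0 :: 'm and n :: nat
  assumes "group G"
    and "finite S" and "S \<subseteq> carrier G" and "generate G S = carrier G"
    and "Metric_space M dM"
    and "group_action G M \<phi>"
    and "\<forall>g\<in>carrier G. \<forall>x\<in>M. \<forall>y\<in>M. dM (\<phi> g x) (\<phi> g y) = dM x y"
    and "\<forall>x\<in>M. \<forall>y\<in>M. \<exists>g\<in>carrier G. \<phi> g x = y"
    and "x0 \<in> M"
    and "asymptotic_property_C M dM"
    and "\<forall>R>0. asdim_le (quasi_stabilizer G \<phi> dM R x0) (word_dist G S) n"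
  shows "asymptotic_property_C (carrier G) (word_dist G S)"
proof -
  interpret isometric_action G M \<phi> dM
    unfolding isometric_action_def isometric_action_axioms_def using assms(5-7) by blast
  show ?thesis
    using assms(11) by (intro asymptotic_property_C_carrier[OF assms(2-4,9,10), where n = n]) simp
qed

end
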